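(* For all $a, b \in \mathbb{N}$, $R_\mathrm{cyc}(K_a, S_b) = 1 + (a-1)(b-1)$, where $S_b$ is any star graph of order $b$.
   Context: All graphs are finite, simple and undirected, and a graph of order $n$ has vertex set $\{0,1,\ldots,n-1\}$; $K_n$ is the complete graph on $\{0,\ldots,n-1\}$. A $2$-edge-coloring of $K_n$ assigns each edge a color in $\{1,2\}$. An embedding of $H$ in color $j$ is an injective map $\varphi\colon V(H)\to V(K_n)$ such that every edge $uv$ of $H$ goes to an edge $\{\varphi(u),\varphi(v)\}$ of color $j$; it is increasing up to a cyclic permutation if there exists $t\in V(H)$ such that $(\varphi(t),\ldots,\varphi(|H|-1),\varphi(0),\ldots,\varphi(t-1))$ is increasing. $R_\mathrm{cyc}(H_1,H_2)$ is the smallest $n$ such that every $2$-edge-coloring of $K_n$ admits an embedding of $H_1$ in color $1$ or of $H_2$ in color $2$ that is increasing up to a cyclic permutation. A star graph of order $n$ is a graph on $\{0,\ldots,n-1\}$ in which one vertex (the center, arbitrary) is adjacent to all others and there are no other edges. *)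

theory Defs
  imports Main
begin

text \<open>A finite simple graph of order h on vertex set {0..<h}: pair (order, edge set),
  edges being 2-element subsets of {0..<h}.\<close>
type_synonym graph = "nat \<times> nat set set"

definition is_graph :: "graph \<Rightarrow> bool" where
  "is_graph H \<longleftrightarrow> (\<forall>e\<in>snd H. \<exists>u v. e = {u, v} \<and> u \<noteq> v \<and> u < fst H \<and> v < fst H)"

definition complete_graph :: "nat \<Rightarrow> graph" where
  "complete_graph n = (n, {{u, v} | u v. u < n \<and> v < n \<and> u \<noteq> v})"

definition is_star_graph :: "nat \<Rightarrow> graph \<Rightarrow> bool" where
  "is_star_graph n H \<longleftrightarrow> fst H = n \<and>
     (\<exists>s < n. snd H = {{s, v} | v. v < n \<and> v \<noteq> s})"

definition two_coloring :: "nat \<Rightarrow> (nat set \<Rightarrow> nat) \<Rightarrow> bool" where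
  "two_coloring n c \<longleftrightarrow> (\<forall>u v. u < n \<and> v < n \<and> u \<noteq> v \<longrightarrow> c {u, v} \<in> {1, 2})"

definition embedding :: "graph \<Rightarrow> nat \<Rightarrow> (nat set \<Rightarrow> nat) \<Rightarrow> nat \<Rightarrow> (nat \<Rightarrow> nat) \<Rightarrow> bool" where
  "embedding H n c j \<phi> \<longleftrightarrow> inj_on \<phi> {0..<fst H} \<and> \<phi> ` {0..<fst H} \<subseteq> {0..<n} \<and>
     (\<forall>e\<in>snd H. c (\<phi> ` e) = j)"

definition cyc_increasing :: "nat \<Rightarrow> (nat \<Rightarrow> nat) \<Rightarrow> bool" where
  "cyc_increasing h \<phi> \<longleftrightarrow>
     (\<exists>t < h. \<forall>i j. i < j \<and> j < h \<longrightarrow> \<phi> ((t + i) mod h) < \<phi> ((t + j) mod h))"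

definition cyc_ramsey_prop :: "graph \<Rightarrow> graph \<Rightarrow> nat \<Rightarrow> bool" where
  "cyc_ramsey_prop H1 H2 n \<longleftrightarrow> (\<forall>c. two_coloring n c \<longrightarrow>
     (\<exists>\<phi>. embedding H1 n c 1 \<phi> \<and> cyc_increasing (fst H1) \<phi>) \<or>
     (\<exists>\<phi>. embedding H2 n c 2 \<phi> \<and> cyc_increasing (fst H2) \<phi>))"

definition R_cyc :: "graph \<Rightarrow> graph \<Rightarrow> nat" where
  "R_cyc H1 H2 = (LEAST n. cyc_ramsey_prop H1 H2 n)"

end

theory Submission
  imports Defs
begin

text \<open>
  Upper bound: colour the edges of K_n, n = 1 + (a - 1)(b - 1). If some vertex has b - 1
  neighbours in colour 2, it is the centre of a colour-2 star of order b. Otherwise, repeatedly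
  pick a vertex and discard it together with its colour-2 neighbours (fewer than b vertices in
  total); this can be done a times, and the picked vertices form a colour-1 clique of order a.
  Lower bound: split (a - 1)(b - 1) vertices into a - 1 blocks of b - 1 consecutive vertices and
  colour an edge 2 iff it lies inside a block. A colour-1 clique meets every block at most once
  and a colour-2 star lies inside one block.
  The cyclic order condition is never an obstruction: every vertex set can be enumerated
  increasingly up to rotation with a prescribed vertex (the centre of the star) at a prescribed
  position.
\<close>

lemma cyc_increasing_enumeration:
  assumes "finite W" and "card W = h" and "v \<in> W" and "s < h"
  obtains \<phi> where "bij_betw \<phi> {0..<h} W" and "\<phi> s = v" and "cyc_increasing h \<phi>"
proof -
  have h_pos: "0 < h" using assms(4) by simp
  define xs where "xs = sorted_list_of_set W"
  have len: "length xs = h" and set_xs: "set xs = W" and sorted: "sorted_wrt (<) xs"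
    using assms(1,2) by (simp_all add: xs_def)
  obtain r where r: "r < h" "xs ! r = v"
    using assms(3) set_xs len by (metis in_set_conv_nth)
  \<comment> \<open>xs rotated so that position s holds xs ! r = v; read from position t on, it is xs.\<close>
  define \<phi> where "\<phi> j = xs ! ((j + (r + h - s)) mod h)" for j
  define t where "t = (s + h - r) mod h"
  have rotate: "\<phi> ((t + i) mod h) = xs ! i" if "i < h" for i
  proof -
    have "((t + i) mod h + (r + h - s)) mod h = (s + h - r + i + (r + h - s)) mod h"
      by (simp add: t_def mod_add_left_eq)
    also have "\<dots> = (i + h + h) mod h" using r assms(4) by (simp add: algebra_simps)
    finally show ?thesis using that by (simp add: \<phi>_def)
  qed
  have "\<phi> ` {0..<h} = W"
  proof
    show "\<phi> ` {0..<h} \<subseteq> W" using h_pos len set_xs by (auto simp: \<phi>_def intro!: nth_mem)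
    show "W \<subseteq> \<phi> ` {0..<h}"
    proof
      fix w assume "w \<in> W"
      then obtain i where "i < h" "w = xs ! i" using set_xs len by (metis in_set_conv_nth)
      then show "w \<in> \<phi> ` {0..<h}"
        using rotate h_pos by (metis atLeastLessThan_iff image_eqI mod_less_divisor zero_le)
    qed
  qed
  then have "bij_betw \<phi> {0..<h} W" using assms(2) by (simp add: bij_betw_def inj_on_iff_eq_card)
  moreover have "\<phi> s = v" using r assms(4) by (simp add: \<phi>_def)
  moreover have "cyc_increasing h \<phi>"
    unfolding cyc_increasing_def
    using h_pos rotate sorted len
    by (metis t_def mod_less_divisor sorted_wrt_nth_less order.strict_trans)
  ultimately show thesis by (rule that)
qed

definition color_nbhd :: "nat \<Rightarrow> (nat set \<Rightarrow> nat) \<Rightarrow> nat \<Rightarrow> nat \<Rightarrow> nat set" where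
  "color_nbhd n c j v = {w. w < n \<and> w \<noteq> v \<and> c {v, w} = j}"

definition monochromatic :: "(nat set \<Rightarrow> nat) \<Rightarrow> nat \<Rightarrow> nat set \<Rightarrow> bool" where
  "monochromatic c j C \<longleftrightarrow> (\<forall>x\<in>C. \<forall>y\<in>C. x \<noteq> y \<longrightarrow> c {x, y} = j)"

lemma monochromatic_insert:
  "monochromatic c j (insert x C) \<longleftrightarrow> monochromatic c j C \<and> (\<forall>y\<in>C. y \<noteq> x \<longrightarrow> c {x, y} = j)"
  by (auto simp: monochromatic_def insert_commute)

lemma embedding_edge: "embedding H n c j \<phi> \<Longrightarrow> {u, w} \<in> snd H \<Longrightarrow> c {\<phi> u, \<phi> w} = j"
  unfolding embedding_def by (metis image_empty image_insert)

lemma embedding_order_le: "embedding H n c j \<phi> \<Longrightarrow> fst H \<le> n"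
  unfolding embedding_def
  by (metis card_atLeastLessThan card_inj_on_le finite_atLeastLessThan minus_nat.diff_0)

lemma monochromatic_clique_embedding:
  assumes "C \<subseteq> {0..<n}" and "card C = a" and "0 < a" and "monochromatic c j C"
  shows "\<exists>\<phi>. embedding (complete_graph a) n c j \<phi> \<and> cyc_increasing a \<phi>"
proof -
  have "finite C" using assms(1) finite_subset by blast
  moreover obtain v where "v \<in> C" using assms(2,3) by fastforce
  ultimately obtain \<phi> where \<phi>: "bij_betw \<phi> {0..<a} C" "cyc_increasing a \<phi>"
    using cyc_increasing_enumeration assms(2,3) by metis
  have "embedding (complete_graph a) n c j \<phi>"
    unfolding embedding_def
  proof (intro conjI ballI)
    show "inj_on \<phi> {0..<fst (complete_graph a)}" "\<phi> ` {0..<fst (complete_graph a)} \<subseteq> {0..<n}"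
      using \<phi>(1) assms(1) by (simp_all add: complete_graph_def bij_betw_def)
    fix e assume "e \<in> snd (complete_graph a)"
    then obtain u w where "e = {u, w}" "u < a" "w < a" "u \<noteq> w" by (auto simp: complete_graph_def)
    then show "c (\<phi> ` e) = j"
      using \<phi>(1) assms(4) by (auto simp: monochromatic_def bij_betw_def inj_on_eq_iff)
  qed
  with \<phi>(2) show ?thesis by blast
qed

lemma star_embedding:
  assumes "is_star_graph b S" and "v < n" and "b - 1 \<le> card (color_nbhd n c j v)"
  shows "\<exists>\<phi>. embedding S n c j \<phi> \<and> cyc_increasing b \<phi>"
proof -
  obtain s where s: "s < b" "fst S = b" "snd S = {{s, u} | u. u < b \<and> u \<noteq> s}"
    using assms(1) unfolding is_star_graph_def by blast
  obtain L where L: "L \<subseteq> color_nbhd n c j v" "card L = b - 1" "finite L"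
    using assms(3) obtain_subset_with_card_n by metis
  have "v \<notin> L" using L(1) by (auto simp: color_nbhd_def)
  then have "card (insert v L) = b" using L(2,3) s(1) by simp
  then obtain \<phi> where \<phi>: "bij_betw \<phi> {0..<b} (insert v L)" "\<phi> s = v" "cyc_increasing b \<phi>"
    using cyc_increasing_enumeration L(3) s(1) by (metis finite_insert insertI1)
  have "embedding S n c j \<phi>"
    unfolding embedding_def
  proof (intro conjI ballI)
    show "inj_on \<phi> {0..<fst S}" "\<phi> ` {0..<fst S} \<subseteq> {0..<n}"
      using \<phi>(1) s(2) L(1) assms(2) by (auto simp: bij_betw_def color_nbhd_def)
    fix e assume "e \<in> snd S"
    then obtain u where u: "e = {s, u}" "u < b" "u \<noteq> s" using s(3) by blast
    then have "\<phi> u \<in> insert v L" "\<phi> u \<noteq> v"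
      using \<phi> s(1) by (auto simp: bij_betw_def inj_on_eq_iff)
    then show "c (\<phi> ` e) = j" using u(1) \<phi>(2) L(1) by (auto simp: color_nbhd_def)
  qed
  with \<phi>(3) s(2) show ?thesis by auto
qed

lemma sparse_color_2_imp_monochromatic_clique:
  assumes coloring: "two_coloring n c"
    and sparse: "\<And>v. v < n \<Longrightarrow> card (color_nbhd n c 2 v) < d"
  shows "U \<subseteq> {0..<n} \<Longrightarrow> m * d < card U \<Longrightarrow>
    \<exists>C \<subseteq> U. card C = m + 1 \<and> monochromatic c 1 C"
proof (induction m arbitrary: U)
  case 0
  then obtain x where "x \<in> U" by fastforce
  then show ?case by (intro exI[of _ "{x}"]) (auto simp: monochromatic_def)
next
  case (Suc m)
  have "finite U" using Suc.prems(1) finite_subset by blast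
  obtain x where x: "x \<in> U" using Suc.prems(2) by fastforce
  then have "x < n" using Suc.prems(1) by auto
  define N where "N = insert x (color_nbhd n c 2 x)"
  have "card N \<le> d"
    using sparse[OF \<open>x < n\<close>] by (simp add: N_def color_nbhd_def card_insert_if)
  moreover have "card U \<le> card (U - N) + card N"
  proof -
    have "card U \<le> card ((U - N) \<union> N)"
      using \<open>finite U\<close> by (intro card_mono) (auto simp: N_def color_nbhd_def)
    then show ?thesis using card_Un_le order_trans by blast
  qed
  ultimately have "m * d < card (U - N)" using Suc.prems(2) by simp
  moreover have "U - N \<subseteq> {0..<n}" using Suc.prems(1) by blast
  ultimately obtain C where C: "C \<subseteq> U - N" "card C = m + 1" "monochromatic c 1 C"
    using Suc.IH by blast
  have "c {x, y} = 1" if "y \<in> C" for y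
  proof -
    have "y < n" "y \<noteq> x" "c {x, y} \<noteq> 2"
      using that C(1) Suc.prems(1) by (fastforce simp: N_def color_nbhd_def)+
    then show ?thesis using coloring \<open>x < n\<close> by (auto simp: two_coloring_def)
  qed
  moreover have "x \<notin> C" "finite C" using C(1) N_def \<open>finite U\<close> finite_subset by auto
  ultimately show ?case
    using C x by (intro exI[of _ "insert x C"]) (auto simp: monochromatic_insert)
qed

lemma cyc_ramsey_prop_complete_star:
  assumes "1 \<le> a" and "is_star_graph b S"
  shows "cyc_ramsey_prop (complete_graph a) S (1 + (a - 1) * (b - 1))"
proof -
  define n where "n = 1 + (a - 1) * (b - 1)"
  have "(\<exists>\<phi>. embedding (complete_graph a) n c 1 \<phi> \<and> cyc_increasing a \<phi>) \<or>
        (\<exists>\<phi>. embedding S n c 2 \<phi> \<and> cyc_increasing b \<phi>)"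
    if coloring: "two_coloring n c" for c
  proof (cases "\<exists>v < n. b - 1 \<le> card (color_nbhd n c 2 v)")
    case True
    then show ?thesis using star_embedding[OF assms(2)] by blast
  next
    case False
    then have "\<And>v. v < n \<Longrightarrow> card (color_nbhd n c 2 v) < b - 1" by (simp add: not_le)
    moreover have "(a - 1) * (b - 1) < card {0..<n}" by (simp add: n_def)
    ultimately obtain C where "C \<subseteq> {0..<n}" "card C = a - 1 + 1" "monochromatic c 1 C"
      using sparse_color_2_imp_monochromatic_clique[OF coloring, of "b - 1" "{0..<n}" "a - 1"]
      by auto
    then show ?thesis using monochromatic_clique_embedding[of C n a c 1] assms(1) by simp
  qed
  moreover have "fst S = b" using assms(2) by (simp add: is_star_graph_def)
  ultimately show ?thesis by (simp add: cyc_ramsey_prop_def complete_graph_def n_def)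
qed

definition block_coloring :: "nat \<Rightarrow> nat set \<Rightarrow> nat" where
  "block_coloring k e = (if \<forall>x\<in>e. \<forall>y\<in>e. x div k = y div k then 2 else 1)"

lemma block_coloring_pair: "block_coloring k {x, y} = (if x div k = y div k then 2 else 1)"
  by (auto simp: block_coloring_def)

lemma two_coloring_block_coloring: "two_coloring n (block_coloring k)"
  by (simp add: two_coloring_def block_coloring_pair)

lemma block_coloring_clique_order_le:
  assumes "embedding (complete_graph a) n (block_coloring k) 1 \<phi>" and "n \<le> p * k"
  shows "a \<le> p"
proof -
  have "inj_on (\<lambda>i. \<phi> i div k) {0..<a}"
  proof (rule inj_onI, rule ccontr)
    fix i j assume "i \<in> {0..<a}" "j \<in> {0..<a}" "\<phi> i div k = \<phi> j div k" "i \<noteq> j"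
    then have "{i, j} \<in> snd (complete_graph a)" and "block_coloring k {\<phi> i, \<phi> j} = 2"
      by (auto simp: complete_graph_def block_coloring_pair)
    with embedding_edge[OF assms(1)] show False by fastforce
  qed
  moreover have "(\<lambda>i. \<phi> i div k) ` {0..<a} \<subseteq> {0..<p}"
    using assms by (auto simp: embedding_def complete_graph_def less_mult_imp_div_less)
  ultimately show ?thesis using card_inj_on_le[of _ "{0..<a}" "{0..<p}"] by simp
qed

lemma block_coloring_star_order_le:
  assumes "embedding S n (block_coloring k) 2 \<phi>" and "is_star_graph b S" and "0 < k"
  shows "b \<le> k"
proof -
  obtain s where s: "s < b" "fst S = b" "snd S = {{s, u} | u. u < b \<and> u \<noteq> s}"
    using assms(2) unfolding is_star_graph_def by blast
  define q where "q = \<phi> s div k"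
  have same_block: "\<phi> u div k = q" if "u < b" for u
  proof (cases "u = s")
    case False
    then have "{s, u} \<in> snd S" using s(3) that by blast
    from embedding_edge[OF assms(1) this] show ?thesis
      by (simp add: q_def block_coloring_pair split: if_splits)
  qed (simp add: q_def)
  have "inj_on (\<lambda>u. \<phi> u mod k) {0..<b}"
  proof (rule inj_onI)
    fix u w assume "u \<in> {0..<b}" "w \<in> {0..<b}" "\<phi> u mod k = \<phi> w mod k"
    with same_block have "\<phi> u = \<phi> w" by (metis atLeastLessThan_iff div_mult_mod_eq)
    with assms(1) s(2) show "u = w" using \<open>u \<in> {0..<b}\<close> \<open>w \<in> {0..<b}\<close>
      by (auto simp: embedding_def inj_on_eq_iff)
  qed
  moreover have "(\<lambda>u. \<phi> u mod k) ` {0..<b} \<subseteq> {0..<k}" using assms(3) by auto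
  ultimately show ?thesis using card_inj_on_le[of _ "{0..<b}" "{0..<k}"] by simp
qed

lemma not_cyc_ramsey_prop_complete_star:
  assumes "1 \<le> a" and "is_star_graph b S" and "m \<le> (a - 1) * (b - 1)"
  shows "\<not> cyc_ramsey_prop (complete_graph a) S m"
proof
  assume "cyc_ramsey_prop (complete_graph a) S m"
  then obtain \<phi> where
    "embedding (complete_graph a) m (block_coloring (b - 1)) 1 \<phi> \<or>
     embedding S m (block_coloring (b - 1)) 2 \<phi>"
    using two_coloring_block_coloring unfolding cyc_ramsey_prop_def by blast
  then show False
  proof
    assume "embedding (complete_graph a) m (block_coloring (b - 1)) 1 \<phi>"
    from block_coloring_clique_order_le[OF this assms(3)] show False using assms(1) by simp
  next
    assume star: "embedding S m (block_coloring (b - 1)) 2 \<phi>"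
    have "fst S = b" "1 \<le> b" using assms(2) by (auto simp: is_star_graph_def)
    show False
    proof (cases "b = 1")
      \<comment> \<open>block_coloring 0 puts every vertex into one block, but then there are no vertices.\<close>
      case True
      then show False using embedding_order_le[OF star] \<open>fst S = b\<close> assms(3) by simp
    next
      case False
      then show False using block_coloring_star_order_le[OF star assms(2)] \<open>1 \<le> b\<close> by simp
    qed
  qed
qed

theorem corollary4p26:
  fixes a b :: nat and S :: graph
  assumes "a \<ge> 1" and "b \<ge> 1" and "is_star_graph b S"
  shows "R_cyc (complete_graph a) S = 1 + (a - 1) * (b - 1)"
  \<comment> \<open>b \<ge> 1 is implied by is_star_graph b S.\<close>
  unfolding R_cyc_def
proof (rule Least_equality)
  show "cyc_ramsey_prop (complete_graph a) S (1 + (a - 1) * (b - 1))"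
    using cyc_ramsey_prop_complete_star assms(1,3) .
  show "1 + (a - 1) * (b - 1) \<le> m" if "cyc_ramsey_prop (complete_graph a) S m" for m
    using that not_cyc_ramsey_prop_complete_star[OF assms(1,3), of m] by linarith
qed

end
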